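(* Let $P_n$ denote the path on $n$ vertices. Then for every $n\ge 3$, $f(P_n)=\left\lfloor\frac{n}{2}\right\rfloor$.
   Context: For a graph $G$, a family $\mathcal{P}$ of subsets of $E(G)$ is a separating path system of $G$ if every member is (the edge set of) a path in $G$ and for every pair of distinct edges $e,e'$ some $P\in\mathcal{P}$ contains exactly one of $e,e'$; $f(G)$ is the minimum size of a separating path system of $G$. *)

theory Defs
  imports Main
begin

text \<open>Simple graphs are given by a vertex set V and an edge set E of 2-element subsets of V.\<close>

definition path_edges :: "'a set \<Rightarrow> 'a set set \<Rightarrow> 'a set set \<Rightarrow> bool" where
  "path_edges V E P \<longleftrightarrow>
     (\<exists>xs. xs \<noteq> [] \<and> distinct xs \<and> set xs \<subseteq> V \<and>
        (\<forall>i. Suc i < length xs \<longrightarrow> {xs ! i, xs ! Suc i} \<in> E) \<and>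
        P = {{xs ! i, xs ! Suc i} | i. Suc i < length xs})"

definition separating_path_system :: "'a set \<Rightarrow> 'a set set \<Rightarrow> 'a set set set \<Rightarrow> bool" where
  "separating_path_system V E \<P> \<longleftrightarrow>
     (\<forall>P\<in>\<P>. path_edges V E P) \<and>
     (\<forall>e\<in>E. \<forall>e'\<in>E. e \<noteq> e' \<longrightarrow> (\<exists>P\<in>\<P>. (e \<in> P) \<noteq> (e' \<in> P)))"

definition f_sep :: "'a set \<Rightarrow> 'a set set \<Rightarrow> nat" where
  "f_sep V E = (LEAST k. \<exists>\<P>. finite \<P> \<and> card \<P> = k \<and> separating_path_system V E \<P>)"

definition path_graph_V :: "nat \<Rightarrow> nat set" where
  "path_graph_V n = {0..<n}"

definition path_graph_E :: "nat \<Rightarrow> nat set set" where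
  "path_graph_E n = {{i, Suc i} | i. Suc i < n}"

end

theory Submission
  imports Defs
begin

text \<open>A path in \<open>P\<^sub>n\<close> uses an interval of consecutive edges, so it has at most two end
  vertices. Separating the two edges at an inner vertex \<open>v\<close> forces \<open>v\<close> to be an end vertex of
  some path, and separating the first edge from the last forces \<open>0\<close> or \<open>n - 1\<close> to be one as well;
  hence a separating system has at least \<open>(n - 1) / 2\<close> paths. Conversely, the \<open>k = n div 2\<close>
  windows of \<open>k\<close> consecutive edges starting at \<open>0, \<dots>, k - 1\<close> separate all edges.\<close>

definition list_edges :: "'a list \<Rightarrow> 'a set set" where
  "list_edges xs = {{xs ! i, xs ! Suc i} | i. Suc i < length xs}"

lemma path_edges_iff_list_edges:
  "path_edges V E P \<longleftrightarrow>
     (\<exists>xs. xs \<noteq> [] \<and> distinct xs \<and> set xs \<subseteq> V \<and> list_edges xs \<subseteq> E \<and> P = list_edges xs)"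
  unfolding path_edges_def list_edges_def by blast

lemma path_edges_subset: "path_edges V E P \<Longrightarrow> P \<subseteq> E"
  unfolding path_edges_iff_list_edges by blast

lemma list_edges_rev_subset: "list_edges (rev xs) \<subseteq> list_edges xs"
proof
  fix e assume "e \<in> list_edges (rev xs)"
  then obtain i where i: "Suc i < length xs" "e = {rev xs ! i, rev xs ! Suc i}"
    unfolding list_edges_def by auto
  define j where "j = length xs - Suc (Suc i)"
  have "Suc j < length xs" "e = {xs ! j, xs ! Suc j}"
    using i by (auto simp: j_def rev_nth Suc_diff_Suc insert_commute)
  then show "e \<in> list_edges xs" unfolding list_edges_def by blast
qed

lemma list_edges_rev [simp]: "list_edges (rev xs) = list_edges xs"
  using list_edges_rev_subset[of xs] list_edges_rev_subset[of "rev xs"] by simp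

definition edge_interval :: "nat \<Rightarrow> nat \<Rightarrow> nat set set" where
  "edge_interval a b = {{j, Suc j} | j. a \<le> j \<and> j < b}"

lemma mem_edge_interval: "{v, Suc v} \<in> edge_interval a b \<longleftrightarrow> a \<le> v \<and> v < b"
  unfolding edge_interval_def by (auto simp: doubleton_eq_iff)

lemma list_edges_upt: "list_edges [a..<b] = edge_interval a (b - 1)"
  unfolding list_edges_def edge_interval_def
proof (intro equalityI subsetI; elim CollectE exE conjE)
  fix e i assume "e = {[a..<b] ! i, [a..<b] ! Suc i}" "Suc i < length [a..<b]"
  then show "e \<in> {{j, Suc j} | j. a \<le> j \<and> j < b - 1}" by (auto simp del: upt_Suc)
next
  fix e j assume "e = {j, Suc j}" "a \<le> j" "j < b - 1"
  then have "Suc (j - a) < length [a..<b]" "e = {[a..<b] ! (j - a), [a..<b] ! Suc (j - a)}"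
    by (auto simp del: upt_Suc)
  then show "e \<in> {{[a..<b] ! i, [a..<b] ! Suc i} | i. Suc i < length [a..<b]}" by blast
qed

lemma distinct_unit_steps_monotone:
  fixes xs :: "nat list"
  assumes "distinct xs"
    and steps: "\<forall>i. Suc i < length xs \<longrightarrow> xs ! Suc i = Suc (xs ! i) \<or> xs ! i = Suc (xs ! Suc i)"
  shows "(\<forall>i. Suc i < length xs \<longrightarrow> xs ! Suc i = Suc (xs ! i)) \<or>
         (\<forall>i. Suc i < length xs \<longrightarrow> xs ! i = Suc (xs ! Suc i))"
proof -
  define up where "up i \<longleftrightarrow> xs ! Suc i = Suc (xs ! i)" for i
  have no_turn: "up (Suc i) = up i" if "Suc (Suc i) < length xs" for i
  proof -
    have "xs ! i \<noteq> xs ! Suc (Suc i)"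
      using \<open>distinct xs\<close> that by (simp add: nth_eq_iff_index_eq)
    then show ?thesis
      using steps[rule_format, of i] steps[rule_format, of "Suc i"] that unfolding up_def by arith
  qed
  have up_const: "up i = up 0" if "Suc i < length xs" for i
    using that
  proof (induction i)
    case (Suc i)
    then show ?case using no_turn[of i] by simp
  qed simp
  show ?thesis
  proof (cases "up 0")
    case True
    then show ?thesis using up_const unfolding up_def by blast
  next
    case False
    then show ?thesis using up_const steps unfolding up_def by blast
  qed
qed

lemma ascending_unit_steps_eq_upt:
  assumes "\<And>i. Suc i < length xs \<Longrightarrow> xs ! Suc i = Suc (xs ! i)"
  shows "xs = [hd xs..<hd xs + length xs]"
proof (rule nth_equalityI)
  fix i assume "i < length xs"
  then have "xs ! i = hd xs + i"
    by (induction i) (auto simp: assms hd_conv_nth)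
  then show "xs ! i = [hd xs..<hd xs + length xs] ! i"
    using \<open>i < length xs\<close> by simp
qed simp

lemma path_graph_E_unit_step: "{x, y} \<in> path_graph_E n \<Longrightarrow> y = Suc x \<or> x = Suc y"
  unfolding path_graph_E_def by (auto simp: doubleton_eq_iff)

lemma path_in_path_graph_eq_edge_interval:
  assumes "path_edges V (path_graph_E n) P"
  obtains a b where "P = edge_interval a b"
proof -
  obtain xs where "distinct xs" and xs_edges: "list_edges xs \<subseteq> path_graph_E n"
    and P: "P = list_edges xs"
    using assms unfolding path_edges_iff_list_edges by blast
  have steps: "\<forall>i. Suc i < length xs \<longrightarrow> xs ! Suc i = Suc (xs ! i) \<or> xs ! i = Suc (xs ! Suc i)"
  proof (intro allI impI)
    fix i assume "Suc i < length xs"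
    then have "{xs ! i, xs ! Suc i} \<in> path_graph_E n"
      using xs_edges unfolding list_edges_def by blast
    then show "xs ! Suc i = Suc (xs ! i) \<or> xs ! i = Suc (xs ! Suc i)"
      by (rule path_graph_E_unit_step)
  qed
  obtain ys where ys: "list_edges ys = list_edges xs"
    and ascending: "\<And>i. Suc i < length ys \<Longrightarrow> ys ! Suc i = Suc (ys ! i)"
    using distinct_unit_steps_monotone[OF \<open>distinct xs\<close> steps]
  proof (elim disjE)
    assume "\<forall>i. Suc i < length xs \<longrightarrow> xs ! i = Suc (xs ! Suc i)"
    then have "rev xs ! Suc i = Suc (rev xs ! i)" if "Suc i < length (rev xs)" for i
      using that by (auto simp: rev_nth Suc_diff_Suc)
    then show thesis using that[of "rev xs"] by simp
  qed (use that in blast)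
  have "P = list_edges [hd ys..<hd ys + length ys]"
    using ascending_unit_steps_eq_upt[OF ascending] P ys by simp
  then show thesis using that list_edges_upt by simp
qed

lemma mem_path_graph_E: "{v, Suc v} \<in> path_graph_E n \<longleftrightarrow> Suc v < n"
  unfolding path_graph_E_def by (auto simp: doubleton_eq_iff)

lemma singleton_notin_path_graph_E: "{v} \<notin> path_graph_E n"
  unfolding path_graph_E_def by (auto simp: doubleton_eq_iff)

lemma edge_interval_path:
  assumes "a \<le> b" "b < n"
  shows "path_edges (path_graph_V n) (path_graph_E n) (edge_interval a b)"
  unfolding path_edges_iff_list_edges
proof (intro exI conjI)
  let ?xs = "[a..<Suc b]"
  show "?xs \<noteq> []" "distinct ?xs" using assms by auto
  show "set ?xs \<subseteq> path_graph_V n" using assms unfolding path_graph_V_def by auto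
  show eq: "edge_interval a b = list_edges ?xs"
    using list_edges_upt[of a "Suc b"] by (simp del: upt_Suc)
  have "edge_interval a b \<subseteq> path_graph_E n"
    using assms unfolding edge_interval_def path_graph_E_def by auto
  then show "list_edges ?xs \<subseteq> path_graph_E n" by (simp add: eq)
qed

text \<open>The vertices of degree one in \<open>P\<close>. For \<open>v = 0\<close> the pair \<open>{v - 1, v}\<close> collapses to the
  non-edge \<open>{0}\<close>.\<close>
definition end_vertices :: "nat set set \<Rightarrow> nat set" where
  "end_vertices P = {v. ({v - 1, v} \<in> P) \<noteq> ({v, Suc v} \<in> P)}"

lemma end_vertices_edge_interval: "end_vertices (edge_interval a b) \<subseteq> {a, b}"
proof
  fix v assume v: "v \<in> end_vertices (edge_interval a b)"
  show "v \<in> {a, b}"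
  proof (cases v)
    case 0
    then show ?thesis using v mem_edge_interval[of 0 a b]
      unfolding end_vertices_def edge_interval_def by (auto simp: doubleton_eq_iff)
  next
    case (Suc w)
    then show ?thesis using v mem_edge_interval[of w a b] mem_edge_interval[of v a b]
      unfolding end_vertices_def by auto
  qed
qed

lemma end_vertices_path_graph_path:
  assumes "path_edges V (path_graph_E n) P"
  shows "finite (end_vertices P)" "card (end_vertices P) \<le> 2"
proof -
  obtain a b where "P = edge_interval a b"
    using path_in_path_graph_eq_edge_interval[OF assms] .
  then have sub: "end_vertices P \<subseteq> {a, b}" using end_vertices_edge_interval by simp
  then show "finite (end_vertices P)" by (rule finite_subset) simp
  have "card {a, b} \<le> 2" by (cases "a = b") auto
  then show "card (end_vertices P) \<le> 2" using card_mono[OF _ sub] by simp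
qed

lemma separating_path_system_path_graph_end_vertices:
  assumes "n \<ge> 3" and "finite PP"
    and sep: "separating_path_system (path_graph_V n) (path_graph_E n) PP"
  shows "n - 1 \<le> card (\<Union>P\<in>PP. end_vertices P)"
proof -
  define U where "U = (\<Union>P\<in>PP. end_vertices P)"
  have paths: "\<And>P. P \<in> PP \<Longrightarrow> path_edges (path_graph_V n) (path_graph_E n) P"
    and separated: "\<And>e e'. \<lbrakk>e \<in> path_graph_E n; e' \<in> path_graph_E n; e \<noteq> e'\<rbrakk>
                       \<Longrightarrow> \<exists>P\<in>PP. (e \<in> P) \<noteq> (e' \<in> P)"
    using sep unfolding separating_path_system_def by auto
  have "finite U"
    unfolding U_def using \<open>finite PP\<close> end_vertices_path_graph_path(1)[OF paths] by blast
  have inner: "{1..n - 2} \<subseteq> U"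
  proof
    fix v assume v: "v \<in> {1..n - 2}"
    have "{v - 1, v} \<in> path_graph_E n" "{v, Suc v} \<in> path_graph_E n" "{v - 1, v} \<noteq> {v, Suc v}"
      using v mem_path_graph_E[of "v - 1" n] mem_path_graph_E[of v n]
      by (auto simp: doubleton_eq_iff)
    then obtain P where "P \<in> PP" "({v - 1, v} \<in> P) \<noteq> ({v, Suc v} \<in> P)"
      using separated by blast
    then show "v \<in> U" unfolding U_def end_vertices_def by blast
  qed
  txt \<open>The first and the last edge are separated by a path that ends at \<open>0\<close> or at \<open>n - 1\<close>.\<close>
  have first: "{0, 1} \<in> path_graph_E n" and last: "{n - 2, n - 1} \<in> path_graph_E n"
    using assms(1) mem_path_graph_E[of 0 n] mem_path_graph_E[of "n - 2" n]
    by (simp_all add: Suc_diff_Suc numeral_2_eq_2)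
  have "0 \<notin> {n - 2, n - 1}" using assms(1) by simp
  then have "{0, 1} \<noteq> {n - 2, n - 1}" by blast
  from separated[OF first last this]
  obtain P where P: "P \<in> PP" "({0, 1} \<in> P) \<noteq> ({n - 2, n - 1} \<in> P)" ..
  have "P \<subseteq> path_graph_E n" using path_edges_subset[OF paths[OF \<open>P \<in> PP\<close>]] .
  then have "{0} \<notin> P" "{n - 1, Suc (n - 1)} \<notin> P"
    using singleton_notin_path_graph_E mem_path_graph_E[of "n - 1" n] by auto
  then have "0 \<in> end_vertices P \<or> n - 1 \<in> end_vertices P"
    using P(2) \<open>n \<ge> 3\<close> unfolding end_vertices_def by (auto simp: numeral_2_eq_2)
  then obtain w where "w \<in> U" "w \<notin> {1..n - 2}"
    using P(1) \<open>n \<ge> 3\<close> unfolding U_def by fastforce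
  then have "insert w {1..n - 2} \<subseteq> U" using inner by blast
  then have "card (insert w {1..n - 2}) \<le> card U" using card_mono[OF \<open>finite U\<close>] by blast
  then show ?thesis using \<open>w \<notin> {1..n - 2}\<close> unfolding U_def by simp
qed

lemma card_separating_path_system_path_graph_ge:
  assumes "n \<ge> 3" and "finite PP"
    and sep: "separating_path_system (path_graph_V n) (path_graph_E n) PP"
  shows "n div 2 \<le> card PP"
proof -
  have paths: "\<And>P. P \<in> PP \<Longrightarrow> path_edges (path_graph_V n) (path_graph_E n) P"
    using sep unfolding separating_path_system_def by auto
  have "n - 1 \<le> card (\<Union>P\<in>PP. end_vertices P)"
    using separating_path_system_path_graph_end_vertices[OF assms] .
  also have "\<dots> \<le> (\<Sum>P\<in>PP. card (end_vertices P))" using card_UN_le[OF \<open>finite PP\<close>] .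
  also have "\<dots> \<le> 2 * card PP"
    using sum_bounded_above[of PP "\<lambda>P. card (end_vertices P)" 2]
      end_vertices_path_graph_path(2)[OF paths] by (simp add: mult.commute)
  finally show ?thesis by linarith
qed

lemma sliding_window_separates:
  fixes i i' k :: nat
  assumes "i < i'" "i' < 2 * k"
  shows "\<exists>j<k. (j \<le> i \<and> i < j + k) \<noteq> (j \<le> i' \<and> i' < j + k)"
proof (cases "i' < k")
  case True
  then show ?thesis using assms by (intro exI[of _ i']) auto
next
  case False
  show ?thesis
  proof (cases "i < k")
    case True
    then show ?thesis using assms False by (intro exI[of _ 0]) auto
  next
    case False
    then show ?thesis using assms by (intro exI[of _ "Suc i - k"]) auto
  qed
qed

lemma separating_path_system_windows:
  fixes n :: nat
  defines "k \<equiv> n div 2"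
  shows "separating_path_system (path_graph_V n) (path_graph_E n)
           ((\<lambda>j. edge_interval j (j + k)) ` {..<k})"
  unfolding separating_path_system_def
proof (intro conjI ballI impI)
  fix P assume "P \<in> (\<lambda>j. edge_interval j (j + k)) ` {..<k}"
  then obtain j where "j < k" "P = edge_interval j (j + k)" by blast
  moreover have "j + k < n" using \<open>j < k\<close> unfolding k_def by linarith
  ultimately show "path_edges (path_graph_V n) (path_graph_E n) P"
    using edge_interval_path[of j "j + k" n] by simp
next
  fix e e' assume "e \<in> path_graph_E n" "e' \<in> path_graph_E n" "e \<noteq> e'"
  then obtain i i' where i: "e = {i, Suc i}" "Suc i < n" and i': "e' = {i', Suc i'}" "Suc i' < n"
    unfolding path_graph_E_def by blast
  have "i < 2 * k" "i' < 2 * k" using i(2) i'(2) unfolding k_def by linarith+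
  moreover have "i \<noteq> i'" using \<open>e \<noteq> e'\<close> i(1) i'(1) by blast
  ultimately obtain j where "j < k" "(j \<le> i \<and> i < j + k) \<noteq> (j \<le> i' \<and> i' < j + k)"
    using sliding_window_separates[of i i' k] sliding_window_separates[of i' i k]
    by (cases "i < i'") fastforce+
  then show "\<exists>P\<in>(\<lambda>j. edge_interval j (j + k)) ` {..<k}. (e \<in> P) \<noteq> (e' \<in> P)"
    using i(1) i'(1) by (intro bexI[of _ "edge_interval j (j + k)"]) (simp_all add: mem_edge_interval)
qed

theorem proposition7p2:
  fixes n :: nat
  assumes "n \<ge> 3"
  shows "f_sep (path_graph_V n) (path_graph_E n) = n div 2"
proof -
  define PP where "PP = (\<lambda>j. edge_interval j (j + n div 2)) ` {..<n div 2}"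
  have sep: "separating_path_system (path_graph_V n) (path_graph_E n) PP"
    unfolding PP_def by (rule separating_path_system_windows)
  have "finite PP" "card PP \<le> n div 2"
    unfolding PP_def using card_image_le[of "{..<n div 2}"] by auto
  then have "card PP = n div 2"
    using card_separating_path_system_path_graph_ge[OF assms _ sep] by simp
  then show ?thesis
    unfolding f_sep_def
    using \<open>finite PP\<close> sep card_separating_path_system_path_graph_ge[OF assms]
    by (intro Least_equality) blast+
qed

end
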